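(* The map $\Upsilon$ is a bijection from $\mathcal{F}$ to $\mathcal{C}^I$, with inverse given by $\Gamma$.
   Context: Fix $I\in\mathbb{N}$. $\mathcal{C}=\{f\in C(\mathbb{R}_+,\mathbb{R}_+):f(0)=0,f\text{ non-decreasing}\}$, $\mathcal{C}^\uparrow=\{f\in\mathcal{C}:f\text{ strictly increasing},\lim_{u\to\infty}f(u)=\infty\}$. For $\psi\in\mathcal{C}^I$, $\phi_i(u):=u-\sum_{j=1}^I2(i\wedge j)\psi_j(u)$; $\mathcal{F}:=\{\psi\in\mathcal{C}^I:\phi_I\in\mathcal{C}^\uparrow\}$; for $\psi\in\mathcal{F}$ each $\phi_i\in\mathcal{C}^\uparrow$ and $\Upsilon(\psi):=(\psi_i\circ\phi_i^{-1})_{i=1}^I$. For $\bar\psi\in\mathcal{C}^I$, $\gamma_I(z):=z$, $\gamma_i(z):=z+\sum_{j>i}2(j-i)\bar\psi_j(\gamma_j(z))$ for $i=I-1,\dots,0$ (each in $\mathcal{C}^\uparrow$), and $\Gamma(\bar\psi):=(\bar\psi_i\circ\gamma_i\circ\gamma_0^{-1})_{i=1}^I$. *)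

theory Defs
  imports "HOL-Analysis.Analysis"
begin

text \<open>Functions R+ -> R+ are represented as real => real; only values on {0..} matter.
  I-tuples are represented as nat => real => real, indexed by 1..I, normalised to be
  0 outside the index range {1..I} and outside the domain {0..}, so that equality of
  tuples is plain HOL equality.\<close>

definition Cfun :: "(real \<Rightarrow> real) \<Rightarrow> bool" where
  "Cfun f \<longleftrightarrow> continuous_on {0..} f \<and> f 0 = 0 \<and> (\<forall>u\<ge>0. f u \<ge> 0) \<and> mono_on {0..} f"

definition Cup :: "(real \<Rightarrow> real) \<Rightarrow> bool" where
  "Cup f \<longleftrightarrow> Cfun f \<and> strict_mono_on {0..} f \<and> filterlim f at_top at_top"

definition CI :: "nat \<Rightarrow> (nat \<Rightarrow> real \<Rightarrow> real) set" where
  "CI I = {\<psi>. (\<forall>i\<in>{1..I}. Cfun (\<psi> i)) \<and>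
              (\<forall>i u. (i \<notin> {1..I} \<or> u < 0) \<longrightarrow> \<psi> i u = 0)}"

definition phi :: "nat \<Rightarrow> (nat \<Rightarrow> real \<Rightarrow> real) \<Rightarrow> nat \<Rightarrow> real \<Rightarrow> real" where
  "phi I \<psi> i u = u - (\<Sum>j=1..I. 2 * real (min i j) * \<psi> j u)"

definition FF :: "nat \<Rightarrow> (nat \<Rightarrow> real \<Rightarrow> real) set" where
  "FF I = {\<psi> \<in> CI I. Cup (phi I \<psi> I)}"

definition Upsilon :: "nat \<Rightarrow> (nat \<Rightarrow> real \<Rightarrow> real) \<Rightarrow> nat \<Rightarrow> real \<Rightarrow> real" where
  "Upsilon I \<psi> = (\<lambda>i u. if i \<in> {1..I} \<and> 0 \<le> u
       then \<psi> i (the_inv_into {0..} (phi I \<psi> i) u) else 0)"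

function gam :: "nat \<Rightarrow> (nat \<Rightarrow> real \<Rightarrow> real) \<Rightarrow> nat \<Rightarrow> real \<Rightarrow> real" where
  "gam I \<psi> i z = (if I \<le> i then z
      else z + (\<Sum>j\<in>{i<..I}. 2 * real (j - i) * \<psi> j (gam I \<psi> j z)))"
  by pat_completeness auto
termination
  by (relation "Wellfounded.measure (\<lambda>(I, \<psi>, i, z). I - i)") auto

definition Gamma :: "nat \<Rightarrow> (nat \<Rightarrow> real \<Rightarrow> real) \<Rightarrow> nat \<Rightarrow> real \<Rightarrow> real" where
  "Gamma I \<psi> = (\<lambda>i u. if i \<in> {1..I} \<and> 0 \<le> u
       then \<psi> i (gam I \<psi> i (the_inv_into {0..} (gam I \<psi> 0) u)) else 0)"

end

theory Submission
  imports Defs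
begin

text \<open>Splitting the sum defining phi at i gives phi_i = phi_I + sum_{j>i} 2(j-i) psi_j, and
  phi_0 = id. For psi in F and psi' = Upsilon psi we have psi'_j (phi_j u) = psi_j u, so downward
  induction on i gives gamma_i (phi_I u) = phi_i u for the gamma built from psi'. At i = 0 this
  says gamma_0 = phi_I^{-1}, whence Gamma(psi')_i = psi'_i o phi_i = psi_i.
  Conversely, for psi' in C^I and psi = Gamma psi' we have psi_j (gamma_0 z) = psi'_j (gamma_j z),
  and the same splitting read at u = gamma_0 z gives phi_i (gamma_0 z) = gamma_i z. So
  phi_I = gamma_0^{-1} is in C-up, i.e. psi is in F, and
  Upsilon(psi)_i (gamma_i z) = psi_i (gamma_0 z) = psi'_i (gamma_i z); as gamma_i maps [0,oo) onto
  itself, Upsilon psi = psi'. The analytic input is that C-up is closed under inversion and under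
  adding a function from C.\<close>

lemma Cup_imp_Cfun: "Cup f \<Longrightarrow> Cfun f"
  by (simp add: Cup_def)

lemma Cfun_nonneg: "Cfun f \<Longrightarrow> 0 \<le> u \<Longrightarrow> 0 \<le> f u"
  by (simp add: Cfun_def)

lemma Cfun_mono: "Cfun f \<Longrightarrow> 0 \<le> u \<Longrightarrow> u \<le> v \<Longrightarrow> f u \<le> f v"
  by (simp add: Cfun_def mono_on_def)

lemma Cfun_cong:
  assumes "Cfun f" "\<And>u. 0 \<le> u \<Longrightarrow> g u = f u"
  shows "Cfun g"
proof -
  have "continuous_on {0..} g"
    using assms continuous_on_cong[of "{0..}" "{0..}" g f] by (simp add: Cfun_def)
  then show ?thesis
    using assms by (simp add: Cfun_def mono_on_def)
qed

lemma Cfun_compose: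
  assumes "Cfun f" "Cfun g"
  shows "Cfun (\<lambda>u. f (g u))"
proof -
  have "g ` {0..} \<subseteq> {0..}"
    using Cfun_nonneg[OF assms(2)] by auto
  then have "continuous_on {0..} (\<lambda>u. f (g u))"
    using assms continuous_on_subset[of "{0..}" f "g ` {0..}"]
      continuous_on_compose[of "{0..}" g f] by (simp add: Cfun_def comp_def)
  moreover have "mono_on {0..} (\<lambda>u. f (g u))"
    using assms by (intro mono_onI) (simp add: Cfun_mono Cfun_nonneg)
  ultimately show ?thesis
    using assms by (simp add: Cfun_def)
qed

lemma Cfun_sum:
  assumes "finite S" "\<And>j. j \<in> S \<Longrightarrow> 0 \<le> c j" "\<And>j. j \<in> S \<Longrightarrow> Cfun (F j)"
  shows "Cfun (\<lambda>u. \<Sum>j\<in>S. c j * F j u)"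
proof -
  have "continuous_on {0..} (\<lambda>u. \<Sum>j\<in>S. c j * F j u)"
    using assms(3) by (auto simp: Cfun_def intro!: continuous_intros)
  moreover have "mono_on {0..} (\<lambda>u. \<Sum>j\<in>S. c j * F j u)"
    using assms(2,3) by (intro mono_onI sum_mono mult_left_mono) (auto simp: Cfun_mono)
  ultimately show ?thesis
    using assms(2,3) by (simp add: Cfun_def sum_nonneg)
qed

lemma Cup_cong:
  assumes "Cup f" "\<And>u. 0 \<le> u \<Longrightarrow> g u = f u"
  shows "Cup g"
proof -
  have "eventually (\<lambda>u. f u = g u) at_top"
    using eventually_ge_at_top[of "0::real"] by eventually_elim (use assms(2) in auto)
  then have "filterlim g at_top at_top"
    using assms(1) filterlim_cong[OF refl refl, of f g] by (simp add: Cup_def)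
  moreover have "strict_mono_on {0..} g"
    using assms by (auto simp: Cup_def strict_mono_on_def)
  ultimately show ?thesis
    using Cfun_cong[OF Cup_imp_Cfun] assms by (simp add: Cup_def)
qed

lemma Cup_ident: "Cup (\<lambda>u. u)"
  by (simp add: Cup_def Cfun_def filterlim_ident strict_mono_on_ident mono_on_ident)

lemma Cup_add_Cfun:
  assumes "Cup f" "Cfun g"
  shows "Cup (\<lambda>u. f u + g u)"
proof -
  have f: "Cfun f" "strict_mono_on {0..} f" "filterlim f at_top at_top"
    using assms(1) by (auto simp: Cup_def)
  have mono: "strict_mono_on {0..} (\<lambda>u. f u + g u)"
  proof (rule strict_mono_onI)
    fix r s :: real assume "r \<in> {0..}" "s \<in> {0..}" "r < s"
    then show "f r + g r < f s + g s"
      using strict_mono_onD[OF f(2)] Cfun_mono[OF assms(2), of r s] by fastforce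
  qed
  have "eventually (\<lambda>u. f u \<le> f u + g u) at_top"
    using eventually_ge_at_top[of "0::real"] by eventually_elim (simp add: Cfun_nonneg[OF assms(2)])
  then have "filterlim (\<lambda>u. f u + g u) at_top at_top"
    by (rule filterlim_at_top_mono[OF f(3)])
  with mono f(1) assms(2) show ?thesis
    by (auto simp: Cup_def Cfun_def strict_mono_on_imp_mono_on intro: continuous_on_add)
qed

lemma Cfun_image_atLeastAtMost:
  assumes "Cfun f" "0 \<le> b"
  shows "f ` {0..b} = {0..f b}"
proof
  show "f ` {0..b} \<subseteq> {0..f b}"
    using Cfun_nonneg[OF assms(1)] Cfun_mono[OF assms(1)] by auto
  show "{0..f b} \<subseteq> f ` {0..b}"
  proof
    fix y assume y: "y \<in> {0..f b}"
    have "continuous_on {0..b} f" "f 0 = 0"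
      using assms(1) continuous_on_subset[of "{0..}" f "{0..b}"] by (auto simp: Cfun_def)
    then obtain x where "0 \<le> x" "x \<le> b" "f x = y"
      using IVT'[of f 0 y b] y assms(2) by auto
    then show "y \<in> f ` {0..b}" by auto
  qed
qed

lemma Cup_image_atLeast:
  assumes "Cup f"
  shows "f ` {0..} = {0..}"
proof
  show "f ` {0..} \<subseteq> {0..}"
    using assms Cup_imp_Cfun Cfun_nonneg by fastforce
  show "{0..} \<subseteq> f ` {0..}"
  proof
    fix y :: real assume "y \<in> {0..}"
    from assms have "eventually (\<lambda>b. y \<le> f b \<and> 0 \<le> b) at_top"
      by (auto simp: Cup_def filterlim_at_top intro: eventually_conj eventually_ge_at_top)
    then obtain b where "y \<le> f b" "0 \<le> b"
      by (auto simp: eventually_at_top_linorder)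
    with \<open>y \<in> {0..}\<close> have "y \<in> f ` {0..b}"
      using Cfun_image_atLeastAtMost[OF Cup_imp_Cfun[OF assms]] by auto
    then show "y \<in> f ` {0..}" by auto
  qed
qed

lemma Cup_bij_betw: "Cup f \<Longrightarrow> bij_betw f {0..} {0..}"
  by (simp add: bij_betw_def Cup_image_atLeast Cup_def strict_mono_on_imp_inj_on)

lemma Cup_the_inv_into:
  assumes "Cup f" "0 \<le> y"
  shows "0 \<le> the_inv_into {0..} f y" "f (the_inv_into {0..} f y) = y"
  using bij_betw_the_inv_into[OF Cup_bij_betw[OF assms(1)]]
    f_the_inv_into_f_bij_betw[OF Cup_bij_betw[OF assms(1)]] assms(2)
  by (auto dest: bij_betwE)

lemma Cup_the_inv_into_eq: "Cup f \<Longrightarrow> 0 \<le> x \<Longrightarrow> f x = y \<Longrightarrow> the_inv_into {0..} f y = x"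
  by (auto simp: Cup_def intro: the_inv_into_f_eq strict_mono_on_imp_inj_on)

lemma Cup_the_inv_into_strict_mono_on:
  assumes "Cup f"
  shows "strict_mono_on {0..} (the_inv_into {0..} f)"
proof (rule strict_mono_onI)
  fix a b :: real assume "a \<in> {0..}" "b \<in> {0..}" "a < b"
  then show "the_inv_into {0..} f a < the_inv_into {0..} f b"
    using strict_mono_on_less[of "{0..}" f "the_inv_into {0..} f a" "the_inv_into {0..} f b"]
      Cup_the_inv_into[OF assms] assms by (simp add: Cup_def)
qed

lemma Cup_the_inv_into_continuous_on:
  assumes "Cup f"
  shows "continuous_on {0..} (the_inv_into {0..} f)"
proof -
  let ?g = "the_inv_into {0..} f"
  have f: "strict_mono_on {0..} f" "Cfun f"
    using assms by (auto simp: Cup_def)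
  \<comment> \<open>f has a continuous inverse on the compact [0,b], and [0, f b] is a neighbourhood
    of y in [0,oo)\<close>
  have "continuous (at y within {0..}) ?g" if "0 \<le> y" for y
  proof -
    define b where "b = ?g y + 1"
    have "0 \<le> b" "y < f b"
      using Cup_the_inv_into[OF assms that] strict_mono_onD[OF f(1), of "?g y" b]
      by (auto simp: b_def)
    have "continuous_on {0..b} f"
      using f(2) continuous_on_subset[of "{0..}" f "{0..b}"] by (auto simp: Cfun_def)
    moreover have "\<forall>x\<in>{0..b}. ?g (f x) = x"
      using Cup_the_inv_into_eq[OF assms] by simp
    ultimately have "continuous_on (f ` {0..b}) ?g"
      by (intro continuous_on_inv) auto
    then have "continuous_on {0..f b} ?g"
      using Cfun_image_atLeastAtMost[OF f(2) \<open>0 \<le> b\<close>] by simp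
    then have "continuous (at y within {0..f b}) ?g"
      using that \<open>y < f b\<close> by (simp add: continuous_on_eq_continuous_within)
    moreover have "at y within {0..f b} = at y within {0..}"
      by (rule at_within_nhd[where S="{..<f b}"]) (use \<open>y < f b\<close> in auto)
    ultimately show ?thesis by simp
  qed
  then show ?thesis
    by (simp add: continuous_on_eq_continuous_within)
qed

lemma Cup_the_inv_into_Cup:
  assumes "Cup f"
  shows "Cup (the_inv_into {0..} f)"
proof -
  let ?g = "the_inv_into {0..} f"
  have f: "Cfun f"
    using assms by (rule Cup_imp_Cfun)
  have "filterlim ?g at_top at_top"
    unfolding filterlim_at_top eventually_at_top_linorder
  proof
    fix M :: real
    have "M \<le> ?g y" if "f (max M 0) \<le> y" for y
    proof -
      have "0 \<le> f (max M 0)"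
        using Cfun_nonneg[OF f] by simp
      then have "?g (f (max M 0)) \<le> ?g y"
        using strict_mono_on_less_eq[OF Cup_the_inv_into_strict_mono_on[OF assms], of "f (max M 0)" y]
          that by simp
      then show ?thesis
        using Cup_the_inv_into_eq[OF assms, of "max M 0"] by simp
    qed
    then show "\<exists>N. \<forall>y\<ge>N. M \<le> ?g y" by force
  qed
  moreover have "?g 0 = 0"
    using Cup_the_inv_into_eq[OF assms] f by (simp add: Cfun_def)
  ultimately show ?thesis
    using Cup_the_inv_into_strict_mono_on[OF assms] Cup_the_inv_into_continuous_on[OF assms]
      Cup_the_inv_into(1)[OF assms]
    by (simp add: Cup_def Cfun_def strict_mono_on_imp_mono_on)
qed

lemma restrict_in_CI:
  assumes "\<And>i. i \<in> {1..I} \<Longrightarrow> Cfun (F i)"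
  shows "(\<lambda>i u. if i \<in> {1..I} \<and> 0 \<le> u then F i u else 0) \<in> CI I"
  using assms Cfun_cong[OF assms] by (auto simp: CI_def)

lemma CI_Cfun: "\<psi> \<in> CI I \<Longrightarrow> i \<in> {1..I} \<Longrightarrow> Cfun (\<psi> i)"
  by (simp add: CI_def)

lemma CI_eqI:
  assumes "\<psi> \<in> CI I" "\<psi>' \<in> CI I" "\<And>i u. i \<in> {1..I} \<Longrightarrow> 0 \<le> u \<Longrightarrow> \<psi> i u = \<psi>' i u"
  shows "\<psi> = \<psi>'"
proof (intro ext)
  fix i u
  show "\<psi> i u = \<psi>' i u"
    using assms by (cases "i \<in> {1..I} \<and> 0 \<le> u") (auto simp: CI_def)
qed

lemma phi_0 [simp]: "phi I \<psi> 0 u = u"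
  by (simp add: phi_def)

lemma phi_eq_phi_top_plus:
  assumes "i \<le> I"
  shows "phi I \<psi> i u = phi I \<psi> I u + (\<Sum>j\<in>{i<..I}. 2 * real (j - i) * \<psi> j u)"
proof -
  have "(\<Sum>j\<in>{i<..I}. 2 * real (j - i) * \<psi> j u)
      = (\<Sum>j=1..I. 2 * (real (min I j) - real (min i j)) * \<psi> j u)"
    by (rule sum.mono_neutral_cong_left) (auto simp: of_nat_diff)
  then show ?thesis
    by (simp add: phi_def left_diff_distrib right_diff_distrib sum_subtractf)
qed

lemma FF_Cup_phi:
  assumes "\<psi> \<in> FF I" "i \<le> I"
  shows "Cup (phi I \<psi> i)"
proof -
  have "Cfun (\<lambda>u. \<Sum>j\<in>{i<..I}. 2 * real (j - i) * \<psi> j u)"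
    using assms(1) by (intro Cfun_sum) (auto simp: FF_def CI_def)
  then have "Cup (\<lambda>u. phi I \<psi> I u + (\<Sum>j\<in>{i<..I}. 2 * real (j - i) * \<psi> j u))"
    using assms(1) by (intro Cup_add_Cfun) (simp_all add: FF_def)
  moreover have "phi I \<psi> i = (\<lambda>u. phi I \<psi> I u + (\<Sum>j\<in>{i<..I}. 2 * real (j - i) * \<psi> j u))"
    by (intro ext phi_eq_phi_top_plus[OF assms(2)])
  ultimately show ?thesis
    by simp
qed

declare gam.simps [simp del]

lemma gam_eq: "gam I \<psi> i z = z + (\<Sum>j\<in>{i<..I}. 2 * real (j - i) * \<psi> j (gam I \<psi> j z))"
  by (subst gam.simps) auto

lemma gam_top [simp]: "gam I \<psi> I z = z"
  by (simp add: gam_eq[of I \<psi> I])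

lemma CI_Cup_gam:
  assumes "\<psi> \<in> CI I"
  shows "Cup (gam I \<psi> i)"
proof (induction "I - i" arbitrary: i rule: less_induct)
  case less
  have "Cfun (\<lambda>z. \<Sum>j\<in>{i<..I}. 2 * real (j - i) * \<psi> j (gam I \<psi> j z))"
  proof (rule Cfun_sum)
    fix j assume j: "j \<in> {i<..I}"
    then have "Cup (gam I \<psi> j)"
      using less by auto
    with j show "Cfun (\<lambda>z. \<psi> j (gam I \<psi> j z))"
      using assms by (auto simp: CI_Cfun Cfun_compose Cup_imp_Cfun)
  qed auto
  then show ?case
    using Cup_add_Cfun[OF Cup_ident] by (subst gam_eq[abs_def]) simp
qed

lemma Upsilon_in_CI:
  assumes "\<psi> \<in> FF I"
  shows "Upsilon I \<psi> \<in> CI I"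
  unfolding Upsilon_def
proof (rule restrict_in_CI)
  fix i assume i: "i \<in> {1..I}"
  then have "Cfun (\<psi> i)"
    using assms CI_Cfun[of \<psi> I i] by (simp add: FF_def)
  moreover have "Cfun (the_inv_into {0..} (phi I \<psi> i))"
    using FF_Cup_phi[OF assms] i by (simp add: Cup_the_inv_into_Cup Cup_imp_Cfun)
  ultimately show "Cfun (\<lambda>u. \<psi> i (the_inv_into {0..} (phi I \<psi> i) u))"
    by (rule Cfun_compose)
qed

lemma Upsilon_phi:
  assumes "\<psi> \<in> FF I" "j \<in> {1..I}" "0 \<le> u"
  shows "Upsilon I \<psi> j (phi I \<psi> j u) = \<psi> j u"
proof -
  have "Cup (phi I \<psi> j)"
    using FF_Cup_phi assms(1,2) by simp
  then have "0 \<le> phi I \<psi> j u" "the_inv_into {0..} (phi I \<psi> j) (phi I \<psi> j u) = u"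
    using assms(3) by (simp_all add: Cup_the_inv_into_eq Cfun_nonneg Cup_imp_Cfun)
  then show ?thesis
    using assms(2) by (simp add: Upsilon_def)
qed

lemma gam_Upsilon_phi_top:
  assumes "\<psi> \<in> FF I" "0 \<le> u" "i \<le> I"
  shows "gam I (Upsilon I \<psi>) i (phi I \<psi> I u) = phi I \<psi> i u"
  using assms(3)
proof (induction "I - i" arbitrary: i rule: less_induct)
  case less
  have "gam I (Upsilon I \<psi>) j (phi I \<psi> I u) = phi I \<psi> j u" if "j \<in> {i<..I}" for j
    using less that by auto
  then have "(\<Sum>j\<in>{i<..I}. 2 * real (j - i) * Upsilon I \<psi> j (gam I (Upsilon I \<psi>) j (phi I \<psi> I u)))
      = (\<Sum>j\<in>{i<..I}. 2 * real (j - i) * \<psi> j u)"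
    using Upsilon_phi[OF assms(1) _ assms(2)] by (intro sum.cong) auto
  then show ?case
    using phi_eq_phi_top_plus[OF less.prems] by (subst gam_eq) simp
qed

lemma Gamma_in_CI:
  assumes "\<psi> \<in> CI I"
  shows "Gamma I \<psi> \<in> CI I"
  unfolding Gamma_def
proof (rule restrict_in_CI)
  fix i assume "i \<in> {1..I}"
  with assms have "Cfun (\<psi> i)"
    by (rule CI_Cfun)
  moreover have "Cfun (\<lambda>u. gam I \<psi> i (the_inv_into {0..} (gam I \<psi> 0) u))"
    using assms by (simp add: Cfun_compose Cup_imp_Cfun Cup_the_inv_into_Cup CI_Cup_gam)
  ultimately show "Cfun (\<lambda>u. \<psi> i (gam I \<psi> i (the_inv_into {0..} (gam I \<psi> 0) u)))"
    by (rule Cfun_compose)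
qed

lemma Gamma_Upsilon:
  assumes "\<psi> \<in> FF I"
  shows "Gamma I (Upsilon I \<psi>) = \<psi>"
proof (rule CI_eqI)
  show "Gamma I (Upsilon I \<psi>) \<in> CI I" "\<psi> \<in> CI I"
    using assms by (simp_all add: Gamma_in_CI Upsilon_in_CI FF_def)
  fix i and u :: real
  assume i: "i \<in> {1..I}" and u: "0 \<le> u"
  have "0 \<le> phi I \<psi> I u"
    using assms u by (simp add: FF_def Cup_imp_Cfun Cfun_nonneg)
  moreover have "gam I (Upsilon I \<psi>) 0 (phi I \<psi> I u) = u"
    using gam_Upsilon_phi_top[OF assms u, of 0] by simp
  ultimately have "the_inv_into {0..} (gam I (Upsilon I \<psi>) 0) u = phi I \<psi> I u"
    using Cup_the_inv_into_eq[OF CI_Cup_gam[OF Upsilon_in_CI[OF assms]]] by blast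
  then show "Gamma I (Upsilon I \<psi>) i u = \<psi> i u"
    using i u gam_Upsilon_phi_top[OF assms u, of i] Upsilon_phi[OF assms i u]
    by (simp add: Gamma_def)
qed

lemma Gamma_gam:
  assumes "\<psi> \<in> CI I" "j \<in> {1..I}" "0 \<le> z"
  shows "Gamma I \<psi> j (gam I \<psi> 0 z) = \<psi> j (gam I \<psi> j z)"
proof -
  have "Cup (gam I \<psi> 0)"
    by (rule CI_Cup_gam[OF assms(1)])
  then have "0 \<le> gam I \<psi> 0 z" "the_inv_into {0..} (gam I \<psi> 0) (gam I \<psi> 0 z) = z"
    using assms(3) by (simp_all add: Cup_the_inv_into_eq Cfun_nonneg Cup_imp_Cfun)
  then show ?thesis
    using assms(2) by (simp add: Gamma_def)
qed

lemma phi_Gamma_gam: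
  assumes "\<psi> \<in> CI I" "0 \<le> z" "i \<le> I"
  shows "phi I (Gamma I \<psi>) i (gam I \<psi> 0 z) = gam I \<psi> i z"
proof -
  have tail: "(\<Sum>j\<in>{k<..I}. 2 * real (j - k) * Gamma I \<psi> j (gam I \<psi> 0 z))
      = (\<Sum>j\<in>{k<..I}. 2 * real (j - k) * \<psi> j (gam I \<psi> j z))" for k
    using Gamma_gam[OF assms(1) _ assms(2)] by (intro sum.cong) auto
  \<comment> \<open>phi_0 is the identity and gam_0 z = z + (tail at 0), so the case i = 0 pins down phi_I\<close>
  have "phi I (Gamma I \<psi>) I (gam I \<psi> 0 z) = z"
    using phi_eq_phi_top_plus[of 0 I "Gamma I \<psi>" "gam I \<psi> 0 z"] tail[of 0] gam_eq[of I \<psi> 0 z]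
    by simp
  then show ?thesis
    using phi_eq_phi_top_plus[OF assms(3), of "Gamma I \<psi>" "gam I \<psi> 0 z"] tail[of i]
      gam_eq[of I \<psi> i z]
    by simp
qed

lemma Gamma_in_FF:
  assumes "\<psi> \<in> CI I"
  shows "Gamma I \<psi> \<in> FF I"
proof -
  have gam_0: "Cup (gam I \<psi> 0)"
    by (rule CI_Cup_gam[OF assms])
  have "phi I (Gamma I \<psi>) I u = the_inv_into {0..} (gam I \<psi> 0) u" if "0 \<le> u" for u
    using phi_Gamma_gam[OF assms Cup_the_inv_into(1)[OF gam_0 that], of I]
      Cup_the_inv_into(2)[OF gam_0 that]
    by simp
  then have "Cup (phi I (Gamma I \<psi>) I)"
    by (rule Cup_cong[OF Cup_the_inv_into_Cup[OF gam_0]])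
  then show ?thesis
    using Gamma_in_CI[OF assms] by (simp add: FF_def)
qed

lemma Upsilon_Gamma:
  assumes "\<psi> \<in> CI I"
  shows "Upsilon I (Gamma I \<psi>) = \<psi>"
proof (rule CI_eqI)
  show "Upsilon I (Gamma I \<psi>) \<in> CI I" "\<psi> \<in> CI I"
    using assms by (simp_all add: Upsilon_in_CI Gamma_in_FF)
  fix i and u :: real
  assume i: "i \<in> {1..I}" and u: "0 \<le> u"
  obtain z where z: "0 \<le> z" "gam I \<psi> i z = u"
    using Cup_image_atLeast[OF CI_Cup_gam[OF assms, of i]] u by (metis atLeast_iff imageE)
  have "0 \<le> gam I \<psi> 0 z"
    using CI_Cup_gam[OF assms] z(1) by (simp add: Cup_imp_Cfun Cfun_nonneg)
  have "Upsilon I (Gamma I \<psi>) i u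
      = Upsilon I (Gamma I \<psi>) i (phi I (Gamma I \<psi>) i (gam I \<psi> 0 z))"
    using phi_Gamma_gam[OF assms z(1)] i z(2) by simp
  also have "\<dots> = Gamma I \<psi> i (gam I \<psi> 0 z)"
    using Upsilon_phi[OF Gamma_in_FF[OF assms] i \<open>0 \<le> gam I \<psi> 0 z\<close>] .
  also have "\<dots> = \<psi> i u"
    using Gamma_gam[OF assms i z(1)] z(2) by simp
  finally show "Upsilon I (Gamma I \<psi>) i u = \<psi> i u" .
qed

theorem proposition3p7:
  fixes I :: nat
  assumes "1 \<le> I"
  shows "bij_betw (Upsilon I) (FF I) (CI I)
    \<and> (\<forall>\<psi>\<in>CI I. Gamma I \<psi> \<in> FF I \<and> Upsilon I (Gamma I \<psi>) = \<psi>)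
    \<and> (\<forall>\<psi>\<in>FF I. Gamma I (Upsilon I \<psi>) = \<psi>)"
proof -
  have "bij_betw (Upsilon I) (FF I) (CI I)"
    by (rule bij_betw_byWitness[where f' = "Gamma I"])
      (auto simp: Gamma_Upsilon Upsilon_Gamma Upsilon_in_CI Gamma_in_FF)
  then show ?thesis
    by (simp add: Gamma_Upsilon Upsilon_Gamma Gamma_in_FF)
qed

end
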